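(* Let $0\le\underline{\tau}<\overline{\tau}<\infty$, $\gamma\ge0$, let $f$ be a piecewise continuous probability density supported on $[\underline{\tau},\overline{\tau}]$, and let $\beta:[0,\infty)\to(0,\infty)$ be continuous and decreasing with $\lim_{x\to+\infty}\beta(x)=0$ and with $x\mapsto x\beta(x)$ Lipschitz. Assume $\delta=0$ and $$\int_{\underline{\tau}}^{\overline{\tau}}e^{-\gamma\tau}f(\tau)\,d\tau>\frac12,$$ and assume there exists $\overline{x}\ge0$ such that $x\mapsto x\beta(x)$ is decreasing on $[\overline{x},\infty)$. For $\mu\ge0$ let $x(t)$ be the unique continuous solution on $[0,\infty)$ of: $x(0)=\mu$; $$x'(t)=-\beta(x(t))x(t)+2\beta(\mu)\mu\int_{\underline{\tau}}^{\overline{\tau}}e^{-\gamma\tau}f(\tau)d\tau,\quad 0\le t\le\underline{\tau};$$ $$x'(t)=-\beta(x(t))x(t)+2\beta(\mu)\mu\int_t^{\overline{\tau}}e^{-\gamma\tau}f(\tau)d\tau+2\int_{\underline{\tau}}^{t}e^{-\gamma\tau}f(\tau)\beta(x(t-\tau))x(t-\tau)d\tau,\quad \underline{\tau}\le t\le\overline{\tau};$$ $$x'(t)=-\beta(x(t))x(t)+2\int_{\underline{\tau}}^{\overline{\tau}}e^{-\gamma\tau}f(\tau)\beta(x(t-\tau))x(t-\tau)d\tau,\quad t\ge\overline{\tau}.$$ If $\mu\ge\overline{x}$, then $\lim_{t\to+\infty}x(t)=+\infty$.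
   Context: This $x(t)$ is the total resting stem cell population in an age-structured hematopoiesis model (with resting-cell loss rate $\delta=0$, proliferating-cell apoptosis rate $\gamma$, entry rate $\beta(x)$ into proliferation, and division-time density $f$), where the initial resting population is $\mu$ and the initial proliferating age distribution is the one consistent with the model. *)

theory Defs
  imports "HOL-Analysis.Analysis"
begin

definition piecewise_continuous_on :: "real \<Rightarrow> real \<Rightarrow> (real \<Rightarrow> real) \<Rightarrow> bool" where
  "piecewise_continuous_on a b g \<longleftrightarrow>
     (\<exists>S. finite S \<and> continuous_on ({a..b} - S) g \<and>
        (\<forall>s\<in>S. (s > a \<longrightarrow> (\<exists>l. (g \<longlongrightarrow> l) (at_left s))) \<and>
                (s < b \<longrightarrow> (\<exists>r. (g \<longlongrightarrow> r) (at_right s)))))"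

definition pc_density_on :: "real \<Rightarrow> real \<Rightarrow> (real \<Rightarrow> real) \<Rightarrow> bool" where
  "pc_density_on a b g \<longleftrightarrow>
     (\<forall>t. 0 \<le> g t) \<and> (\<forall>t. t \<notin> {a..b} \<longrightarrow> g t = 0) \<and>
     piecewise_continuous_on a b g \<and>
     g integrable_on {a..b} \<and> integral {a..b} g = 1"

end

theory Submission
  imports Defs
begin

text \<open>Write h y = \<beta> y * y for the flux into proliferation. The inflow into the resting
  phase at time t is twice a weighted sum of past values of h (the initial proliferating
  cells contribute h \<mu>), with total weight K = \<integral> exp(-\<gamma>\<tau>) f(\<tau>) d\<tau> > 1/2, and h is decreasing
  beyond \<mu> \<ge> xbar. While x has been nondecreasing on [0,T], every past value of h is at least
  h (x T), so x' \<ge> (2K - 1) h (x T) > 0 at T and, by continuity, slightly beyond; real induction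
  makes x nondecreasing on [0,\<infinity>). If x were bounded by M, then x' \<ge> (2K - 1) h M > 0 would
  force x past M.\<close>

lemma integrable_on_mult_continuous:
  fixes w g :: "real \<Rightarrow> real"
  assumes "w integrable_on {a..b}" "\<And>s. s \<in> {a..b} \<Longrightarrow> 0 \<le> w s" "continuous_on {a..b} g"
  shows "(\<lambda>s. w s * g s) integrable_on {a..b}"
proof -
  have "w absolutely_integrable_on {a..b}"
    using assms by (intro nonnegative_absolutely_integrable_1) auto
  moreover have "g \<in> borel_measurable (lebesgue_on {a..b})"
    using assms(3) by (intro continuous_imp_measurable_on_sets_lebesgue) auto
  moreover have "bounded (g ` {a..b})"
    using assms(3) by (intro compact_imp_bounded compact_continuous_image) auto
  ultimately have "(\<lambda>s. g s * w s) absolutely_integrable_on {a..b}"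
    by (intro absolutely_integrable_bounded_measurable_product_real) auto
  then show ?thesis
    by (simp add: absolutely_integrable_on_def mult.commute[of "w _"])
qed

lemma integral_weighted_ge:
  fixes w g :: "real \<Rightarrow> real"
  assumes "w integrable_on {a..b}" "\<And>s. s \<in> {a..b} \<Longrightarrow> 0 \<le> w s" "continuous_on {a..b} g"
    and "\<And>s. s \<in> {a..b} \<Longrightarrow> m \<le> g s"
  shows "m * integral {a..b} w \<le> integral {a..b} (\<lambda>s. w s * g s)"
proof -
  have "integral {a..b} (\<lambda>s. m * w s) \<le> integral {a..b} (\<lambda>s. w s * g s)"
  proof (rule integral_le)
    show "(\<lambda>s. m * w s) integrable_on {a..b}"
      using integrable_on_cmult_left[OF assms(1), of m] by simp
    show "(\<lambda>s. w s * g s) integrable_on {a..b}"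
      using assms(1-3) by (rule integrable_on_mult_continuous)
  qed (use assms(2,4) in \<open>simp add: mult.commute mult_right_mono\<close>)
  then show ?thesis by simp
qed

lemma diff_ge_if_derivative_ge:
  fixes x :: "real \<Rightarrow> real"
  assumes "u \<le> v" "{u..v} \<subseteq> S"
    and "\<And>t. t \<in> {u..v} \<Longrightarrow> \<exists>D. (x has_real_derivative D) (at t within S) \<and> c \<le> D"
  shows "c * (v - u) \<le> x v - x u"
proof -
  obtain D where D: "\<And>t. t \<in> {u..v} \<Longrightarrow> (x has_real_derivative D t) (at t within S) \<and> c \<le> D t"
    using assms(3) by metis
  have "\<exists>y\<in>{u..v}. x v - x u = (\<lambda>t h. D t * h) y (v - u)"
  proof (rule mvt_very_simple[OF assms(1)])
    fix t assume "u \<le> t" "t \<le> v"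
    then have "(x has_real_derivative D t) (at t within S)"
      using D by auto
    then have "(x has_real_derivative D t) (at t within {u..v})"
      using assms(2) by (rule DERIV_subset)
    then show "(x has_derivative (\<lambda>h. D t * h)) (at t within {u..v})"
      by (simp add: has_field_derivative_def)
  qed
  then show ?thesis
    using D assms(1) by (metis diff_ge_0_iff_ge mult_right_mono)
qed

lemma real_induction:
  fixes P :: "real \<Rightarrow> bool"
  assumes closed: "\<And>T. a \<le> T \<Longrightarrow> \<forall>s\<in>{a..<T}. P s \<Longrightarrow> P T"
    and extend: "\<And>T. a \<le> T \<Longrightarrow> \<forall>s\<in>{a..T}. P s \<Longrightarrow> \<exists>d>0. \<forall>s\<in>{T..T+d}. P s"
    and "a \<le> t"
  shows "P t"
proof (rule ccontr)
  assume "\<not> P t"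
  define S where "S = {T. a \<le> T \<and> (\<forall>s\<in>{a..T}. P s)}"
  have "a \<in> S"
    unfolding S_def using closed[of a] by auto
  have bdd: "bdd_above S"
    using \<open>\<not> P t\<close> \<open>a \<le> t\<close> by (intro bdd_aboveI[of _ t]) (force simp: S_def)
  define T where "T = Sup S"
  have "a \<le> T"
    unfolding T_def using \<open>a \<in> S\<close> bdd by (rule cSup_upper)
  have below: "P s" if "s \<in> {a..<T}" for s
  proof -
    have "s < Sup S"
      using that by (simp add: T_def)
    then obtain r where "r \<in> S" "s < r"
      using less_cSup_iff[OF _ bdd] \<open>a \<in> S\<close> by blast
    then show ?thesis using that by (auto simp: S_def)
  qed
  have upto_T: "\<forall>s\<in>{a..T}. P s"
  proof
    fix s assume "s \<in> {a..T}"
    then show "P s"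
      using below closed[OF \<open>a \<le> T\<close>] by (cases "s < T") auto
  qed
  then obtain d where "d > 0" and beyond_T: "\<forall>s\<in>{T..T+d}. P s"
    using extend \<open>a \<le> T\<close> by blast
  have "\<forall>s\<in>{a..T+d}. P s"
  proof
    fix s assume "s \<in> {a..T+d}"
    then show "P s"
      using upto_T beyond_T by (cases "s \<le> T") auto
  qed
  then have "T + d \<in> S"
    using \<open>a \<le> T\<close> \<open>d > 0\<close> by (simp add: S_def)
  then have "T + d \<le> T"
    unfolding T_def using bdd by (rule cSup_upper)
  with \<open>d > 0\<close> show False by simp
qed

text \<open>The model reduced to what the growth argument uses: derivative_ge says that the delayed
  inflow is at least 2K times any lower bound m of the flux h along the history.\<close>

locale delayed_growth =
  fixes x h :: "real \<Rightarrow> real" and K \<mu> :: real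
  assumes K_gt: "1/2 < K"
    and mu_pos: "0 < \<mu>"
    and h_pos: "\<And>y. \<mu> \<le> y \<Longrightarrow> 0 < h y"
    and h_antimono: "\<And>y z. \<mu> \<le> y \<Longrightarrow> y \<le> z \<Longrightarrow> h z \<le> h y"
    and h_cont: "continuous_on {0<..} h"
    and x_cont: "continuous_on {0..} x"
    and x_0: "x 0 = \<mu>"
    and derivative_ge: "\<And>t m. 0 \<le> t \<Longrightarrow> \<forall>v\<in>{0..t}. 0 \<le> x v \<and> m \<le> h (x v) \<Longrightarrow>
       \<exists>D. (x has_real_derivative D) (at t within {0..}) \<and> 2 * K * m - h (x t) \<le> D"
begin

lemma history_bounds:
  assumes "mono_on {0..T} x" "v \<in> {0..T}"
  shows "\<mu> \<le> x v" "h (x T) \<le> h (x v)"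
proof -
  have "0 \<le> v" "v \<le> T" using assms(2) by auto
  then show "\<mu> \<le> x v"
    using mono_onD[OF assms(1), of 0 v] x_0 by simp
  moreover have "x v \<le> x T"
    using assms(1) \<open>0 \<le> v\<close> \<open>v \<le> T\<close> by (auto intro: mono_onD)
  ultimately show "h (x T) \<le> h (x v)"
    by (rule h_antimono)
qed

lemma flux_close_right:
  assumes "0 \<le> T" "\<mu> \<le> x T" "0 < e"
  shows "\<exists>d>0. \<forall>v\<in>{T<..T+d}. 0 < x v \<and> \<bar>h (x v) - h (x T)\<bar> < e"
proof -
  have x_lim: "(x \<longlongrightarrow> x T) (at T within {0..})"
    using x_cont assms(1) by (simp add: continuous_on_def)
  have "isCont h (x T)"
    using h_cont mu_pos assms(2)
    by (intro continuous_on_interior[of "{0<..}"]) (auto simp: interior_open)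
  then have "((\<lambda>v. h (x v)) \<longlongrightarrow> h (x T)) (at T within {0..})"
    using x_lim by (rule isCont_tendsto_compose)
  then have "eventually (\<lambda>v. dist (h (x v)) (h (x T)) < e) (at T within {0..})"
    using assms(3) by (rule tendstoD)
  moreover have "eventually (\<lambda>v. 0 < x v) (at T within {0..})"
    using order_tendstoD(1)[OF x_lim] mu_pos assms(2) by simp
  ultimately have "eventually (\<lambda>v. 0 < x v \<and> dist (h (x v)) (h (x T)) < e) (at T within {0..})"
    by (rule eventually_conj[rotated])
  then obtain d where "0 < d" and near: "\<forall>v\<in>{0..}. 0 < dist v T \<and> dist v T < d
      \<longrightarrow> 0 < x v \<and> dist (h (x v)) (h (x T)) < e"
    unfolding eventually_at by auto
  have "0 < x v \<and> \<bar>h (x v) - h (x T)\<bar> < e" if "v \<in> {T<..T+d/2}" for v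
    using near[rule_format, of v] that assms(1) \<open>0 < d\<close> by (auto simp: dist_real_def)
  then show ?thesis
    using \<open>0 < d\<close> by (intro exI[of _ "d/2"]) auto
qed

lemma derivative_nonneg_near:
  assumes "0 \<le> T" "mono_on {0..T} x"
  shows "\<exists>d>0. \<forall>u\<in>{T..T+d}. \<exists>D. (x has_real_derivative D) (at u within {0..}) \<and> 0 \<le> D"
proof -
  have "\<mu> \<le> x T"
    using history_bounds(1)[OF assms(2)] assms(1) by simp
  define a where "a = h (x T)"
  have "0 < a" unfolding a_def using h_pos \<open>\<mu> \<le> x T\<close> by simp
  define e where "e = a * (2 * K - 1) / (2 * K + 1)"
  have "0 < e"
    unfolding e_def using \<open>0 < a\<close> K_gt by (intro divide_pos_pos mult_pos_pos) auto
  have e_balance: "2 * K * (a - e) - (a + e) = 0"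
    unfolding e_def using K_gt by (simp add: field_simps)
  obtain d where "0 < d" and near: "\<forall>v\<in>{T<..T+d}. 0 < x v \<and> \<bar>h (x v) - a\<bar> < e"
    using flux_close_right[OF assms(1) \<open>\<mu> \<le> x T\<close> \<open>0 < e\<close>] unfolding a_def by blast
  have "\<exists>D. (x has_real_derivative D) (at u within {0..}) \<and> 0 \<le> D" if u: "u \<in> {T..T+d}" for u
  proof -
    have history: "\<forall>v\<in>{0..u}. 0 \<le> x v \<and> a - e \<le> h (x v)"
    proof
      fix v assume v: "v \<in> {0..u}"
      show "0 \<le> x v \<and> a - e \<le> h (x v)"
      proof (cases "v \<le> T")
        case True
        then show ?thesis
          using history_bounds[OF assms(2), of v] v mu_pos \<open>0 < e\<close> by (auto simp: a_def)
      qed (use near[rule_format, of v] v u in \<open>auto simp: abs_less_iff\<close>)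
    qed
    have "h (x u) \<le> a + e"
      using near[rule_format, of u] u \<open>0 < e\<close> by (cases "u = T") (auto simp: a_def abs_less_iff)
    moreover obtain D where "(x has_real_derivative D) (at u within {0..})"
        and "2 * K * (a - e) - h (x u) \<le> D"
      using derivative_ge[of u "a - e"] history u assms(1) by auto
    ultimately show ?thesis
      using e_balance by (intro exI[of _ D]) linarith
  qed
  then show ?thesis
    using \<open>0 < d\<close> by blast
qed

lemma nondecreasing: "mono_on {0..} x"
proof -
  let ?P = "\<lambda>t. \<forall>u\<in>{0..t}. x u \<le> x t"
  have mono_iff: "mono_on {0..T} x \<longleftrightarrow> (\<forall>s\<in>{0..T}. ?P s)" for T
    unfolding mono_on_def by auto
  have "?P t" if "0 \<le> t" for t
    using that
  proof (rule real_induction[of 0 ?P, rotated 2])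
    fix T :: real assume "0 \<le> T" and before: "\<forall>s\<in>{0..<T}. ?P s"
    show "?P T"
    proof
      fix u assume u: "u \<in> {0..T}"
      show "x u \<le> x T"
      proof (cases "u = T")
        case False
        then have "u < T" using u by simp
        have "isCont x T"
          using x_cont u \<open>u < T\<close> by (intro continuous_on_interior[of "{0..}"]) auto
        then have "(x \<longlongrightarrow> x T) (at_left T)"
          by (simp add: isCont_def filterlim_at_split)
        moreover have "eventually (\<lambda>w. x u \<le> x w) (at_left T)"
          unfolding eventually_at_left[OF \<open>u < T\<close>]
          using before u \<open>u < T\<close> by (intro exI[of _ u]) auto
        ultimately show ?thesis
          by (rule tendsto_lowerbound) simp
      qed simp
    qed
  next
    fix T :: real assume "0 \<le> T" and "\<forall>s\<in>{0..T}. ?P s"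
    then have mono_T: "mono_on {0..T} x"
      using mono_iff by blast
    then obtain d where "0 < d"
      and deriv: "\<forall>u\<in>{T..T+d}. \<exists>D. (x has_real_derivative D) (at u within {0..}) \<and> 0 \<le> D"
      using derivative_nonneg_near \<open>0 \<le> T\<close> by blast
    have incr: "x u \<le> x s" if "T \<le> u" "u \<le> s" "s \<le> T + d" for u s
      using diff_ge_if_derivative_ge[of u s "{0..}" x 0] deriv that \<open>0 \<le> T\<close> by auto
    have "?P s" if s: "s \<in> {T..T+d}" for s
    proof
      fix u assume u: "u \<in> {0..s}"
      show "x u \<le> x s"
      proof (cases "u \<le> T")
        case True
        then have "x u \<le> x T"
          using mono_T u \<open>0 \<le> T\<close> by (auto intro: mono_onD)
        also have "\<dots> \<le> x s"
          using incr[of T s] s by simp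
        finally show ?thesis .
      qed (use incr[of u s] s u in simp)
    qed
    then show "\<exists>d>0. \<forall>s\<in>{T..T+d}. ?P s"
      using \<open>0 < d\<close> by blast
  qed
  then show ?thesis
    unfolding mono_on_def by auto
qed

lemma unbounded: "\<exists>t\<ge>0. M < x t"
proof (rule ccontr)
  assume "\<not> (\<exists>t\<ge>0. M < x t)"
  then have bounded_by_M: "x t \<le> M" if "0 \<le> t" for t
    using that by (simp add: not_less)
  have "\<mu> \<le> M"
    using bounded_by_M[of 0] x_0 by simp
  define c where "c = (2 * K - 1) * h M"
  have "0 < c"
    unfolding c_def using K_gt h_pos[OF \<open>\<mu> \<le> M\<close>] by simp
  have deriv: "\<exists>D. (x has_real_derivative D) (at t within {0..}) \<and> c \<le> D" if t: "0 \<le> t" for t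
  proof -
    have mono_t: "mono_on {0..t} x"
      using nondecreasing by (rule mono_on_subset) auto
    have "\<forall>v\<in>{0..t}. 0 \<le> x v \<and> h (x t) \<le> h (x v)"
      using history_bounds[OF mono_t] mu_pos by fastforce
    then obtain D where D: "(x has_real_derivative D) (at t within {0..})"
        "2 * K * h (x t) - h (x t) \<le> D"
      using derivative_ge[of t "h (x t)"] t by blast
    have "\<mu> \<le> x t"
      using history_bounds(1)[OF mono_t] t by simp
    then have "h M \<le> h (x t)"
      using h_antimono bounded_by_M t by blast
    then have "c \<le> (2 * K - 1) * h (x t)"
      unfolding c_def using K_gt by (intro mult_left_mono) auto
    with D show ?thesis
      by (intro exI[of _ D]) (simp add: algebra_simps)
  qed
  define t where "t = (M - \<mu>) / c + 1"
  have "0 \<le> t"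
    unfolding t_def using \<open>\<mu> \<le> M\<close> \<open>0 < c\<close> by simp
  then have "c * (t - 0) \<le> x t - x 0"
    using deriv by (intro diff_ge_if_derivative_ge[of 0 t "{0..}"]) auto
  moreover have "c * t = M - \<mu> + c"
    unfolding t_def using \<open>0 < c\<close> by (simp add: field_simps)
  ultimately show False
    using bounded_by_M[OF \<open>0 \<le> t\<close>] x_0 \<open>0 < c\<close> by simp
qed

theorem tendsto_at_top: "filterlim x at_top at_top"
  unfolding filterlim_at_top eventually_at_top_linorder
proof
  fix M
  obtain t where "0 \<le> t" "M < x t"
    using unbounded by blast
  then show "\<exists>t. \<forall>s\<ge>t. M \<le> x s"
    using mono_onD[OF nondecreasing, of t] by (intro exI[of _ t]) force
qed

end

locale stem_cell_model =
  fixes tl tu \<gamma> \<mu> :: real and f \<beta> x :: "real \<Rightarrow> real"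
  assumes tau: "0 \<le> tl" "tl \<le> tu"
    and f_nonneg: "\<And>s. 0 \<le> f s"
    and f_integrable: "f integrable_on {tl..tu}"
    and beta_cont: "continuous_on {0..} \<beta>"
    and x_cont: "continuous_on {0..} x"
    and x_0: "x 0 = \<mu>"
    and ode1: "\<forall>t. 0 \<le> t \<and> t \<le> tl \<longrightarrow>
       (x has_real_derivative
          (- \<beta> (x t) * x t
           + 2 * \<beta> \<mu> * \<mu> * integral {tl..tu} (\<lambda>s. exp (- \<gamma> * s) * f s)))
       (at t within {0..})"
    and ode2: "\<forall>t. tl \<le> t \<and> t \<le> tu \<longrightarrow>
       (x has_real_derivative
          (- \<beta> (x t) * x t
           + 2 * \<beta> \<mu> * \<mu> * integral {t..tu} (\<lambda>s. exp (- \<gamma> * s) * f s)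
           + 2 * integral {tl..t} (\<lambda>s. exp (- \<gamma> * s) * f s * \<beta> (x (t - s)) * x (t - s))))
       (at t within {0..})"
    and ode3: "\<forall>t. tu \<le> t \<longrightarrow>
       (x has_real_derivative
          (- \<beta> (x t) * x t
           + 2 * integral {tl..tu} (\<lambda>s. exp (- \<gamma> * s) * f s * \<beta> (x (t - s)) * x (t - s))))
       (at t within {0..})"
begin

lemma weight_integrable:
  assumes "tl \<le> a" "b \<le> tu"
  shows "(\<lambda>s. exp (- \<gamma> * s) * f s) integrable_on {a..b}"
proof -
  have "(\<lambda>s. f s * exp (- \<gamma> * s)) integrable_on {tl..tu}"
    using f_integrable f_nonneg by (intro integrable_on_mult_continuous continuous_intros)
  then show ?thesis
    using integrable_subinterval_real assms by (fastforce simp: mult.commute)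
qed

lemma delayed_flux_ge:
  assumes "tl \<le> a" "b \<le> tu" "b \<le> t"
    and history: "\<forall>v\<in>{0..t}. 0 \<le> x v \<and> m \<le> \<beta> (x v) * x v"
  shows "m * integral {a..b} (\<lambda>s. exp (- \<gamma> * s) * f s)
    \<le> integral {a..b} (\<lambda>s. exp (- \<gamma> * s) * f s * \<beta> (x (t - s)) * x (t - s))"
proof -
  have delay_range: "t - s \<in> {0..t}" if "s \<in> {a..b}" for s
    using that assms tau by auto
  have "continuous_on {a..b} (\<lambda>s. x (t - s))"
    using delay_range by (intro continuous_on_compose2[OF x_cont] continuous_intros) auto
  moreover have "continuous_on {a..b} (\<lambda>s. \<beta> (x (t - s)))"
    using delay_range history
    by (intro continuous_on_compose2[OF beta_cont calculation]) auto
  ultimately have "continuous_on {a..b} (\<lambda>s. \<beta> (x (t - s)) * x (t - s))"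
    by (intro continuous_on_mult)
  then have "m * integral {a..b} (\<lambda>s. exp (- \<gamma> * s) * f s)
      \<le> integral {a..b} (\<lambda>s. exp (- \<gamma> * s) * f s * (\<beta> (x (t - s)) * x (t - s)))"
    using weight_integrable assms(1,2) f_nonneg delay_range history
    by (intro integral_weighted_ge) auto
  then show ?thesis
    by (simp add: mult.assoc)
qed

lemma derivative_ge:
  assumes "0 \<le> t" and history: "\<forall>v\<in>{0..t}. 0 \<le> x v \<and> m \<le> \<beta> (x v) * x v"
  shows "\<exists>D. (x has_real_derivative D) (at t within {0..})
    \<and> 2 * integral {tl..tu} (\<lambda>s. exp (- \<gamma> * s) * f s) * m - \<beta> (x t) * x t \<le> D"
proof -
  define w where "w = (\<lambda>s. exp (- \<gamma> * s) * f s)"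
  define K where "K = integral {tl..tu} w"
  have w_nonneg: "integral {a..b} w \<ge> 0" if "tl \<le> a" "b \<le> tu" for a b
    unfolding w_def using weight_integrable that f_nonneg by (intro integral_nonneg) auto
  have "m \<le> \<beta> \<mu> * \<mu>"
    using history assms(1) x_0 by force
  then have source_ge: "m * I \<le> \<beta> \<mu> * \<mu> * I" if "0 \<le> I" for I
    using that by (rule mult_right_mono)
  consider "t \<le> tl" | "tl \<le> t" "t \<le> tu" | "tu \<le> t" by linarith
  then show ?thesis
  proof cases
    case 1
    then show ?thesis
      using ode1 assms(1) source_ge[of K] w_nonneg[of tl tu]
      by (intro exI conjI) (auto simp: K_def w_def algebra_simps)
  next
    case 2
    let ?J = "integral {tl..t} (\<lambda>s. exp (- \<gamma> * s) * f s * \<beta> (x (t - s)) * x (t - s))"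
    have "integral {tl..t} w + integral {t..tu} w = K"
      unfolding K_def w_def using 2 weight_integrable[OF order_refl order_refl]
      by (intro Henstock_Kurzweil_Integration.integral_combine) auto
    then have "K * m = m * integral {tl..t} w + m * integral {t..tu} w"
      by (metis distrib_left mult.commute)
    moreover have "m * integral {tl..t} w \<le> ?J"
      unfolding w_def using delayed_flux_ge[of tl t t] history 2 by auto
    moreover have "m * integral {t..tu} w \<le> \<beta> \<mu> * \<mu> * integral {t..tu} w"
      using source_ge w_nonneg[of t tu] 2 by auto
    moreover have "(x has_real_derivative
        - \<beta> (x t) * x t + 2 * \<beta> \<mu> * \<mu> * integral {t..tu} w + 2 * ?J) (at t within {0..})"
      unfolding w_def using ode2 2 by auto
    moreover have "integral {tl..tu} (\<lambda>s. exp (- \<gamma> * s) * f s) = K"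
      by (simp add: K_def w_def)
    ultimately show ?thesis
      by (intro exI conjI) auto
  next
    case 3
    then show ?thesis
      using ode3 delayed_flux_ge[of tl tu t] history tau
      by (intro exI conjI) (auto simp: algebra_simps)
  qed
qed

end

theorem proposition2p3:
  fixes tl tu \<gamma> \<mu> xbar :: real
    and f \<beta> x :: "real \<Rightarrow> real"
  assumes tau: "0 \<le> tl" "tl < tu"
    and gamma: "\<gamma> \<ge> 0"
    and dens: "pc_density_on tl tu f"
    and beta_cont: "continuous_on {0..} \<beta>"
    and beta_pos: "\<forall>y\<ge>0. \<beta> y > 0"
    and beta_dec: "\<forall>y z. 0 \<le> y \<longrightarrow> y \<le> z \<longrightarrow> \<beta> z \<le> \<beta> y"
    and beta_lim: "(\<beta> \<longlongrightarrow> 0) at_top"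
    and beta_lip: "\<exists>L. lipschitz_on L {0..} (\<lambda>y. y * \<beta> y)"
    and cond: "integral {tl..tu} (\<lambda>s. exp (- \<gamma> * s) * f s) > 1/2"
    and xbar: "xbar \<ge> 0"
    and xbar_dec: "\<forall>y z. xbar \<le> y \<longrightarrow> y \<le> z \<longrightarrow> z * \<beta> z \<le> y * \<beta> y"
    and mu: "\<mu> \<ge> 0"
    and x_cont: "continuous_on {0..} x"
    and x0: "x 0 = \<mu>"
    and ode1: "\<forall>t. 0 \<le> t \<and> t \<le> tl \<longrightarrow>
       (x has_real_derivative
          (- \<beta> (x t) * x t
           + 2 * \<beta> \<mu> * \<mu> * integral {tl..tu} (\<lambda>s. exp (- \<gamma> * s) * f s)))
       (at t within {0..})"
    and ode2: "\<forall>t. tl \<le> t \<and> t \<le> tu \<longrightarrow>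
       (x has_real_derivative
          (- \<beta> (x t) * x t
           + 2 * \<beta> \<mu> * \<mu> * integral {t..tu} (\<lambda>s. exp (- \<gamma> * s) * f s)
           + 2 * integral {tl..t} (\<lambda>s. exp (- \<gamma> * s) * f s * \<beta> (x (t - s)) * x (t - s))))
       (at t within {0..})"
    and ode3: "\<forall>t. tu \<le> t \<longrightarrow>
       (x has_real_derivative
          (- \<beta> (x t) * x t
           + 2 * integral {tl..tu} (\<lambda>s. exp (- \<gamma> * s) * f s * \<beta> (x (t - s)) * x (t - s))))
       (at t within {0..})"
    and mu_ge: "\<mu> \<ge> xbar"
  shows "filterlim x at_top at_top"
proof -
  \<comment> \<open>\<gamma> \<ge> 0 and the monotonicity, limit and Lipschitz hypotheses on \<beta> only serve well-posedness.\<close>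
  interpret model: stem_cell_model tl tu \<gamma> \<mu> f \<beta> x
    using tau dens beta_cont x_cont x0 ode1 ode2 ode3
    by unfold_locales (auto simp: pc_density_on_def)
  have "0 < \<mu>"
  proof (rule ccontr)
    assume "\<not> 0 < \<mu>"
    then have "xbar = 0"
      using xbar mu_ge by simp
    then have "1 * \<beta> 1 \<le> 0 * \<beta> 0"
      using xbar_dec[rule_format, of 0 1] by simp
    then show False
      using beta_pos[rule_format, of 1] by simp
  qed
  interpret growth: delayed_growth x "\<lambda>y. \<beta> y * y"
    "integral {tl..tu} (\<lambda>s. exp (- \<gamma> * s) * f s)" \<mu>
  proof
    have "continuous_on {0<..} \<beta>"
      using beta_cont by (rule continuous_on_subset) auto
    then show "continuous_on {0<..} (\<lambda>y. \<beta> y * y)"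
      by (intro continuous_on_mult continuous_on_id)
    show "\<beta> z * z \<le> \<beta> y * y" if "\<mu> \<le> y" "y \<le> z" for y z
      using xbar_dec[rule_format, of y z] mu_ge that by (simp add: mult.commute)
    show "0 < \<beta> y * y" if "\<mu> \<le> y" for y
      using beta_pos \<open>0 < \<mu>\<close> that by simp
  qed (fact cond \<open>0 < \<mu>\<close> x_cont x0 model.derivative_ge)+
  show ?thesis
    by (rule growth.tendsto_at_top)
qed

end
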